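(* Let $H$ be the group with presentation $$\langle \{x_m\}_{m\in\mathbb{Z}}\cup\{y_n\}_{n\in\mathbb{Z}} \mid \{\,y_n = x_{n+1}^{-1}y_{n+1}^{-1}x_{n+1}\,\}_{n\in\mathbb{Z}}\rangle.$$ Then $H$ is locally free, and each of the generators $x_m$ ($m\in\mathbb{Z}$) and $y_n$ ($n\in\mathbb{Z}$) represents a nontrivial element of $H$.
   Context: A group is locally free if every finitely generated subgroup is free. Work in $\mathsf{ZFC}$. *)

theory Defs
  imports "HOL-Algebra.Algebra"
begin

text \<open>Words over an alphabet of generators: a letter (a, True) stands for the
generator a, and (a, False) for its inverse.\<close>

type_synonym 'a word = "('a \<times> bool) list"

definition inv_letter :: "'a \<times> bool \<Rightarrow> 'a \<times> bool" where
  "inv_letter l = (fst l, \<not> snd l)"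

fun reduced :: "'a word \<Rightarrow> bool" where
  "reduced [] = True"
| "reduced [l] = True"
| "reduced (l # m # w) = (m \<noteq> inv_letter l \<and> reduced (m # w))"

fun cancel_letter :: "'a \<times> bool \<Rightarrow> 'a word \<Rightarrow> 'a word" where
  "cancel_letter l [] = [l]"
| "cancel_letter l (m # w) = (if m = inv_letter l then w else l # m # w)"

definition reduce :: "'a word \<Rightarrow> 'a word" where
  "reduce w = foldr cancel_letter w []"

definition free_grp :: "('a word) monoid" where
  "free_grp = \<lparr>carrier = {w. reduced w}, monoid.mult = (\<lambda>u v. reduce (u @ v)), one = []\<rparr>"

definition normal_closure :: "('g, 'b) monoid_scheme \<Rightarrow> 'g set \<Rightarrow> 'g set" where
  "normal_closure G R =
     generate G (\<Union>g\<in>carrier G. (\<lambda>r. g \<otimes>\<^bsub>G\<^esub> r \<otimes>\<^bsub>G\<^esub> inv\<^bsub>G\<^esub> g) ` R)"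

definition presented_group :: "'a word set \<Rightarrow> ('a word set) monoid" where
  "presented_group R = free_grp Mod normal_closure free_grp (reduce ` R)"

definition pres_gen :: "'a word set \<Rightarrow> 'a \<Rightarrow> 'a word set" where
  "pres_gen R a = normal_closure free_grp (reduce ` R) #>\<^bsub>free_grp\<^esub> [(a, True)]"

definition word_eval :: "('g, 'b) monoid_scheme \<Rightarrow> 'g word \<Rightarrow> 'g" where
  "word_eval G w = foldr (\<lambda>l acc. (if snd l then fst l else inv\<^bsub>G\<^esub> (fst l)) \<otimes>\<^bsub>G\<^esub> acc) w \<one>\<^bsub>G\<^esub>"

definition free_basis :: "('g, 'b) monoid_scheme \<Rightarrow> 'g set \<Rightarrow> bool" where
  "free_basis G B \<longleftrightarrow> B \<subseteq> carrier G \<and> generate G B = carrier G \<and>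
     (\<forall>w. w \<noteq> [] \<and> reduced w \<and> fst ` set w \<subseteq> B \<longrightarrow> word_eval G w \<noteq> \<one>\<^bsub>G\<^esub>)"

definition free_group :: "('g, 'b) monoid_scheme \<Rightarrow> bool" where
  "free_group G \<longleftrightarrow> group G \<and> (\<exists>B. free_basis G B)"

definition locally_free :: "('g, 'b) monoid_scheme \<Rightarrow> bool" where
  "locally_free G \<longleftrightarrow> group G \<and>
     (\<forall>A. finite A \<and> A \<subseteq> carrier G \<longrightarrow> free_group (G\<lparr>carrier := generate G A\<rparr>))"

text \<open>Generators: Inl m = x_m, Inr n = y_n. Relator for y_n = x_{n+1}^-1 y_{n+1}^-1 x_{n+1}:
the word y_n^-1 x_{n+1}^-1 y_{n+1}^-1 x_{n+1}.\<close>
definition H_rels :: "(int + int) word set" where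
  "H_rels = (\<lambda>n. [(Inr n, False), (Inl (n+1), False), (Inr (n+1), False), (Inl (n+1), True)]) ` UNIV"

end

theory Submission
  imports Defs "HOL-Library.Countable"
begin

text \<open>Send \<open>x\<^sub>m\<close> to itself and \<open>y\<^sub>n\<close> to the word obtained by solving the relations
  \<open>y\<^sub>n\<^sub>+\<^sub>1 = x\<^sub>n\<^sub>+\<^sub>1 y\<^sub>n\<inverse> x\<^sub>n\<^sub>+\<^sub>1\<inverse>\<close> upwards and downwards from \<open>y\<^sub>0\<close>.
  This endomorphism \<open>\<phi>\<close> of the free group on all \<open>x\<^sub>m, y\<^sub>n\<close> kills the relators; conversely,
  modulo the relators \<open>y\<^sub>n\<close> and \<open>\<phi>(y\<^sub>n)\<close> satisfy the same recursion with the same initial value,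
  so \<open>\<phi>\<close> is the identity modulo the normal closure \<open>N\<close> of the relators. Hence \<open>ker \<phi> = N\<close>, and
  \<open>H = F/N\<close> embeds into the free group \<open>F\<close>. Subgroups of free groups are free (Nielsen--Schreier,
  proved here with the Schreier transversal of length-lexicographically least coset
  representatives), so \<open>H\<close> is locally free; the generators are nontrivial because their images
  \<open>x\<^sub>m\<close> and \<open>\<phi>(y\<^sub>n)\<close> are nontrivial words.\<close>

section \<open>Free reduction\<close>

definition inv_word :: "'a word \<Rightarrow> 'a word" where
  "inv_word w = rev (map inv_letter w)"

lemma inv_inv_letter [simp]: "inv_letter (inv_letter l) = l"
  by (simp add: inv_letter_def)

lemma inv_word_simps [simp]:
  "inv_word [] = []" "inv_word (l # w) = inv_word w @ [inv_letter l]"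
  "inv_word (u @ v) = inv_word v @ inv_word u" "inv_word (inv_word w) = w"
  "inv_word w = [] \<longleftrightarrow> w = []"
  by (auto simp add: inv_word_def rev_map[symmetric] comp_def)

lemma last_inv_word: "w \<noteq> [] \<Longrightarrow> last (inv_word w) = inv_letter (hd w)"
  by (simp add: inv_word_def last_rev hd_map)

lemma reduced_Cons: "reduced (l # w) \<longleftrightarrow> reduced w \<and> (w \<noteq> [] \<longrightarrow> hd w \<noteq> inv_letter l)"
  by (cases w) auto

lemma reduced_append: "reduced (u @ v) \<longleftrightarrow> reduced u \<and> reduced v \<and>
   (u \<noteq> [] \<and> v \<noteq> [] \<longrightarrow> hd v \<noteq> inv_letter (last u))"
  by (induction u) (auto simp add: reduced_Cons)

lemma reduced_join: "reduced (u @ [l]) \<Longrightarrow> reduced (l # v) \<Longrightarrow> reduced (u @ l # v)"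
  by (auto simp add: reduced_append reduced_Cons)

lemma reduced_inv_word [simp]: "reduced (inv_word w) \<longleftrightarrow> reduced w"
proof (induction w)
  case (Cons l w)
  then show ?case
    by (cases w) (auto simp add: reduced_append reduced_Cons inv_letter_def prod_eq_iff)
qed simp

lemma reduced_cancel_letter: "reduced z \<Longrightarrow> reduced (cancel_letter l z)"
  by (cases z) (auto simp add: reduced_Cons)

lemma reduced_foldr_cancel_letter: "reduced z \<Longrightarrow> reduced (foldr cancel_letter u z)"
  by (induction u) (auto intro: reduced_cancel_letter)

lemma reduced_reduce [simp]: "reduced (reduce w)"
  by (simp add: reduce_def reduced_foldr_cancel_letter)

lemma cancel_letter_inv_cancel:
  "reduced z \<Longrightarrow> cancel_letter l (cancel_letter (inv_letter l) z) = z"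
  by (cases z rule: remdups_adj.cases) (auto simp add: reduced_Cons)

lemma reduce_Nil [simp]: "reduce [] = []"
  by (simp add: reduce_def)

lemma reduce_Cons: "reduce (l # w) = cancel_letter l (reduce w)"
  by (simp add: reduce_def)

lemma reduce_reduced: "reduced w \<Longrightarrow> reduce w = w"
proof (induction w)
  case (Cons l w)
  then have "reduced w" by (simp add: reduced_Cons)
  with Cons show ?case
    by (cases w) (auto simp add: reduce_Cons)
qed simp

lemma reduce_idem [simp]: "reduce (reduce w) = reduce w"
  by (simp add: reduce_reduced)

lemma reduce_append_foldr: "reduce (u @ v) = foldr cancel_letter u (reduce v)"
  by (simp add: reduce_def)

lemma foldr_cancel_letter_reduce:
  "reduced z \<Longrightarrow> foldr cancel_letter u z = foldr cancel_letter (reduce u) z"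
proof (induction u)
  case (Cons l u)
  define r where "r = reduce u"
  have "foldr cancel_letter (l # u) z = cancel_letter l (foldr cancel_letter r z)"
    using Cons by (simp add: r_def)
  also have "\<dots> = foldr cancel_letter (cancel_letter l r) z"
  proof (cases "r \<noteq> [] \<and> hd r = inv_letter l")
    case True
    then obtain r' where r': "r = inv_letter l # r'"
      by (cases r) auto
    then show ?thesis
      using reduced_foldr_cancel_letter[OF Cons.prems] by (simp add: cancel_letter_inv_cancel)
  next
    case False
    then have "cancel_letter l r = l # r"
      by (cases r) auto
    then show ?thesis by simp
  qed
  also have "cancel_letter l r = reduce (l # u)"
    by (simp add: r_def reduce_Cons)
  finally show ?case .
qed simp

lemma reduce_append: "reduce (u @ v) = reduce (reduce u @ reduce v)"
  by (simp add: reduce_append_foldr foldr_cancel_letter_reduce[of "reduce v" u])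

lemma reduce_append_reduce_left [simp]: "reduce (reduce u @ v) = reduce (u @ v)"
  by (metis reduce_append reduce_idem)

lemma reduce_append_reduce_right [simp]: "reduce (u @ reduce v) = reduce (u @ v)"
  by (metis reduce_append reduce_idem)

lemma reduce_append_reduce_middle: "reduce (u @ reduce v @ w) = reduce (u @ v @ w)"
  by (metis reduce_append_reduce_left reduce_append_reduce_right)

lemma reduce_cancel_pair: "reduce (u @ [inv_letter l, l] @ w) = reduce (u @ w)"
  using cancel_letter_inv_cancel[of "reduce w" "inv_letter l"]
  by (simp add: reduce_append_foldr reduce_Cons)

lemma reduce_inv_word_append_cancel: "reduce (u @ inv_word p @ p @ w) = reduce (u @ w)"
proof (induction p arbitrary: w)
  case (Cons l p)
  have "reduce (u @ inv_word (l # p) @ (l # p) @ w) =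
      reduce ((u @ inv_word p) @ [inv_letter l, l] @ (p @ w))"
    by simp
  also have "\<dots> = reduce (u @ inv_word p @ p @ w)"
    by (subst reduce_cancel_pair) simp
  finally show ?case using Cons by simp
qed simp

lemma reduce_append_inv_word_cancel: "reduce (u @ p @ inv_word p @ w) = reduce (u @ w)"
  using reduce_inv_word_append_cancel[of u "inv_word p" w] by simp

lemma reduce_snoc_inv_letter: "reduced x \<Longrightarrow> reduce (x @ [l, inv_letter l]) = x"
  using reduce_append_inv_word_cancel[of x "[l]" "[]"] by (simp add: reduce_reduced)

lemma reduce_snoc:
  assumes "reduced s"
  shows "reduce (s @ [l]) = (if s \<noteq> [] \<and> last s = inv_letter l then butlast s else s @ [l])"
proof (cases "s \<noteq> [] \<and> last s = inv_letter l")
  case True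
  then have s: "s = butlast s @ [inv_letter l]"
    by (metis append_butlast_last_id)
  then have "reduced (butlast s)"
    using assms reduced_append[of "butlast s" "[inv_letter l]"] by simp
  moreover have "reduce (s @ [l]) = reduce (butlast s @ [])"
    by (subst s, subst reduce_cancel_pair[symmetric]) simp
  ultimately show ?thesis
    using True by (simp add: reduce_reduced)
next
  case False
  then have "reduced (s @ [l])"
    using assms by (auto simp add: reduced_append)
  with False show ?thesis
    by (auto simp add: reduce_reduced)
qed

lemma free_grp_simps [simp]:
  "carrier free_grp = {w. reduced w}"
  "x \<otimes>\<^bsub>free_grp\<^esub> y = reduce (x @ y)"
  "\<one>\<^bsub>free_grp\<^esub> = []"
  by (simp_all add: free_grp_def)

lemma group_free_grp: "group free_grp"
proof (rule groupI)
  fix x :: "'a word"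
  assume "x \<in> carrier free_grp"
  then show "\<exists>y\<in>carrier free_grp. y \<otimes>\<^bsub>free_grp\<^esub> x = \<one>\<^bsub>free_grp\<^esub>"
    using reduce_inv_word_append_cancel[of "[]" x "[]"] by (intro bexI[of _ "inv_word x"]) auto
qed (auto simp add: reduce_reduced)

interpretation F: group "free_grp :: 'a word monoid"
  by (rule group_free_grp)

lemma inv_free_grp [simp]: "reduced x \<Longrightarrow> inv\<^bsub>free_grp\<^esub> x = inv_word x"
  using reduce_inv_word_append_cancel[of "[]" x "[]"] reduce_reduced[of x]
  by (intro F.inv_equality) auto


section \<open>Evaluation of words and the universal property\<close>

lemma word_eval_simps [simp]:
  "word_eval G [] = \<one>\<^bsub>G\<^esub>"
  "word_eval G (l # w) = (if snd l then fst l else inv\<^bsub>G\<^esub> (fst l)) \<otimes>\<^bsub>G\<^esub> word_eval G w"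
  by (simp_all add: word_eval_def)

definition free_lift :: "('g, 'b) monoid_scheme \<Rightarrow> ('a \<Rightarrow> 'g) \<Rightarrow> 'a word \<Rightarrow> 'g" where
  "free_lift G g w = word_eval G (map (\<lambda>(a, e). (g a, e)) w)"

context group
begin

lemma word_eval_closed: "fst ` set w \<subseteq> carrier G \<Longrightarrow> word_eval G w \<in> carrier G"
  by (induction w) auto

lemma word_eval_append:
  "fst ` set u \<subseteq> carrier G \<Longrightarrow> fst ` set v \<subseteq> carrier G \<Longrightarrow>
    word_eval G (u @ v) = word_eval G u \<otimes> word_eval G v"
  by (induction u) (auto simp add: m_assoc word_eval_closed)

lemma free_lift_Nil [simp]: "free_lift G g [] = \<one>"
  by (simp add: free_lift_def)

lemma free_lift_Cons:
  "free_lift G g (l # w) = (if snd l then g (fst l) else inv (g (fst l))) \<otimes> free_lift G g w"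
  by (cases l) (simp add: free_lift_def)

context
  fixes g :: "'c \<Rightarrow> 'a"
  assumes g: "range g \<subseteq> carrier G"
begin

lemma free_lift_closed: "free_lift G g w \<in> carrier G"
  unfolding free_lift_def using g by (intro word_eval_closed) auto

lemma free_lift_append: "free_lift G g (u @ v) = free_lift G g u \<otimes> free_lift G g v"
  unfolding free_lift_def using g by (simp, intro word_eval_append) auto

lemma free_lift_cancel_letter:
  "free_lift G g (cancel_letter l z) = free_lift G g [l] \<otimes> free_lift G g z"
proof (cases "z \<noteq> [] \<and> hd z = inv_letter l")
  case True
  then obtain z' where z: "z = inv_letter l # z'"
    by (cases z) auto
  have "free_lift G g [l] \<otimes> free_lift G g [inv_letter l] = \<one>"
    using g by (cases l) (auto simp add: free_lift_Cons inv_letter_def image_subset_iff)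
  then show ?thesis
    using z free_lift_append[of "[inv_letter l]" z'] free_lift_closed
    by (simp add: m_assoc[symmetric] free_lift_closed)
next
  case False
  then have "cancel_letter l z = [l] @ z"
    by (cases z) auto
  then show ?thesis by (simp only: free_lift_append)
qed

lemma free_lift_reduce: "free_lift G g (reduce w) = free_lift G g w"
proof -
  have "free_lift G g (foldr cancel_letter u z) = free_lift G g u \<otimes> free_lift G g z" for u z
  proof (induction u)
    case (Cons l u)
    then show ?case
      using free_lift_append[of "[l]" u]
      by (simp add: free_lift_cancel_letter m_assoc free_lift_closed)
  qed (simp add: free_lift_closed)
  from this[of w "[]"] show ?thesis
    by (simp add: reduce_def free_lift_closed)
qed

lemma free_lift_hom: "free_lift G g \<in> hom free_grp G"
  by (rule homI) (auto simp add: free_lift_closed free_lift_reduce free_lift_append)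

end

lemma hom_free_grp_eq_free_lift:
  assumes h: "h \<in> hom free_grp G" and "reduced w"
  shows "h w = free_lift G (\<lambda>a. h [(a, True)]) w"
  using \<open>reduced w\<close>
proof (induction w)
  case Nil
  then show ?case using hom_one[OF h group_free_grp is_group] by simp
next
  case (Cons l w)
  interpret h: group_hom free_grp G h
    by (intro group_hom.intro group_hom_axioms.intro group_free_grp is_group h)
  have w: "reduced w" and lw: "l # w = [l] \<otimes>\<^bsub>free_grp\<^esub> w"
    using Cons.prems by (simp_all add: reduced_Cons reduce_reduced)
  have "h [(a, False)] = inv (h [(a, True)])" for a
    using h.hom_inv[of "[(a, True)]"] by (simp add: inv_letter_def)
  then have "h [l] = (if snd l then h [(fst l, True)] else inv (h [(fst l, True)]))"
    by (cases l) auto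
  moreover have "h (l # w) = h [l] \<otimes> h w"
    by (subst lw, rule h.hom_mult) (use w in auto)
  ultimately show ?case
    using Cons.IH[OF w] by (simp add: free_lift_Cons)
qed

lemma hom_free_grp_eqI:
  assumes "h \<in> hom free_grp G" "h' \<in> hom free_grp G" "\<And>a. h [(a, True)] = h' [(a, True)]"
    and "reduced w"
  shows "h w = h' w"
  using hom_free_grp_eq_free_lift[OF assms(1,4)] hom_free_grp_eq_free_lift[OF assms(2,4)] assms(3)
  by simp

end

lemma word_eval_subgroup:
  assumes "group G" "subgroup K G" "fst ` set w \<subseteq> K"
  shows "word_eval (G\<lparr>carrier := K\<rparr>) w = word_eval G w"
  using assms(3) by (induction w) (auto simp add: group.m_inv_consistent[OF assms(1,2)])

lemma word_eval_hom:
  assumes "h \<in> hom G G'" "group G" "group G'" "fst ` set w \<subseteq> carrier G"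
  shows "h (word_eval G w) = word_eval G' (map (\<lambda>(x, e). (h x, e)) w)"
proof -
  interpret group_hom G G' h
    by (intro group_hom.intro group_hom_axioms.intro assms)
  show ?thesis
    using assms(4) by (induction w) (auto simp add: G.word_eval_closed)
qed


section \<open>Nielsen--Schreier: subgroups of free groups are free\<close>

definition word_lenlex :: "('a::countable) word rel" where
  "word_lenlex = lenlex (inv_image less_than to_nat)"

lemma wf_word_lenlex: "wf word_lenlex"
  unfolding word_lenlex_def by (intro wf_lenlex wf_inv_image wf_less_than)

lemma total_word_lenlex:
  assumes "x \<noteq> y"
  shows "(x, y) \<in> word_lenlex \<or> (y, x) \<in> word_lenlex"
proof -
  have "total (inv_image less_than (to_nat :: 'a \<times> bool \<Rightarrow> nat))"
    unfolding total_on_def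
  proof (intro ballI impI)
    fix x y :: "'a \<times> bool"
    assume "x \<noteq> y"
    then have "to_nat x \<noteq> to_nat y"
      by (simp add: inj_eq)
    then have "to_nat x < to_nat y \<or> to_nat y < to_nat x"
      by arith
    then show "(x, y) \<in> inv_image less_than to_nat \<or> (y, x) \<in> inv_image less_than to_nat"
      by simp
  qed
  then have "total (lenlex (inv_image less_than (to_nat :: 'a \<times> bool \<Rightarrow> nat)))"
    by (rule total_lenlex)
  with assms show ?thesis
    unfolding word_lenlex_def total_on_def by blast
qed

lemma word_lenlex_length: "(x, y) \<in> word_lenlex \<Longrightarrow> length x \<le> length y"
  unfolding word_lenlex_def by (rule lenlex_length)

lemma word_lenlex_shorter: "length x < length y \<Longrightarrow> (x, y) \<in> word_lenlex"
  unfolding word_lenlex_def by (simp add: lenlex_conv)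

lemma word_lenlex_snoc: "(x, y) \<in> word_lenlex \<Longrightarrow> (x @ [l], y @ [l]) \<in> word_lenlex"
  unfolding word_lenlex_def by (rule lenlex_append1) simp_all

definition lenlex_min :: "('a::countable) word set \<Rightarrow> 'a word" where
  "lenlex_min S = (SOME m. m \<in> S \<and> (\<forall>y\<in>S. (y, m) \<notin> word_lenlex))"

lemma lenlex_min:
  assumes "S \<noteq> {}"
  shows "lenlex_min S \<in> S" "y \<in> S \<Longrightarrow> (y, lenlex_min S) \<notin> word_lenlex"
proof -
  have "\<exists>m. m \<in> S \<and> (\<forall>y\<in>S. (y, m) \<notin> word_lenlex)"
    using assms wfE_min'[OF wf_word_lenlex] by metis
  then have "lenlex_min S \<in> S \<and> (\<forall>y\<in>S. (y, lenlex_min S) \<notin> word_lenlex)"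
    unfolding lenlex_min_def by (rule someI_ex)
  then show "lenlex_min S \<in> S" "y \<in> S \<Longrightarrow> (y, lenlex_min S) \<notin> word_lenlex"
    by auto
qed

locale free_subgroup =
  fixes K :: "('a::countable) word set"
  assumes subgroup: "subgroup K free_grp"
begin

definition min_rep :: "'a word \<Rightarrow> 'a word" where
  "min_rep x = lenlex_min (K #>\<^bsub>free_grp\<^esub> x)"

definition transversal :: "'a word set" where
  "transversal = min_rep ` {w. reduced w}"

lemma K_reduced: "x \<in> K \<Longrightarrow> reduced x"
  using subgroup.subset[OF subgroup] by auto

lemma in_own_coset: "reduced x \<Longrightarrow> x \<in> K #>\<^bsub>free_grp\<^esub> x"
  by (rule F.rcos_self[OF _ subgroup]) simp

lemma min_rep_in_coset: "reduced x \<Longrightarrow> min_rep x \<in> K #>\<^bsub>free_grp\<^esub> x"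
  unfolding min_rep_def using in_own_coset by (intro lenlex_min) auto

lemma min_rep_minimal: "reduced x \<Longrightarrow> (x, min_rep x) \<notin> word_lenlex"
  unfolding min_rep_def using in_own_coset by (intro lenlex_min) auto

lemma min_rep_reduced: "reduced x \<Longrightarrow> reduced (min_rep x)"
  using min_rep_in_coset[of x] F.r_coset_subset_G[of K x] K_reduced by auto

lemma coset_min_rep: "reduced x \<Longrightarrow> K #>\<^bsub>free_grp\<^esub> min_rep x = K #>\<^bsub>free_grp\<^esub> x"
  using F.repr_independence[OF min_rep_in_coset _ subgroup, of x] by simp

lemma min_rep_eqI: "K #>\<^bsub>free_grp\<^esub> x = K #>\<^bsub>free_grp\<^esub> y \<Longrightarrow> min_rep x = min_rep y"
  unfolding min_rep_def by simp

lemma min_rep_transversal: "t \<in> transversal \<Longrightarrow> min_rep t = t"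
  unfolding transversal_def by (auto intro: min_rep_eqI[OF coset_min_rep])

lemma transversal_reduced: "t \<in> transversal \<Longrightarrow> reduced t"
  unfolding transversal_def by (auto simp add: min_rep_reduced)

lemma min_rep_in_transversal: "reduced x \<Longrightarrow> min_rep x \<in> transversal"
  unfolding transversal_def by auto

lemma min_rep_mult:
  assumes "reduced x" "reduced y"
  shows "min_rep (min_rep x \<otimes>\<^bsub>free_grp\<^esub> y) = min_rep (x \<otimes>\<^bsub>free_grp\<^esub> y)"
proof -
  obtain k where k: "k \<in> K" "min_rep x = k \<otimes>\<^bsub>free_grp\<^esub> x"
    using min_rep_in_coset[OF assms(1)] by (auto simp add: r_coset_def)
  then have "min_rep x \<otimes>\<^bsub>free_grp\<^esub> y = k \<otimes>\<^bsub>free_grp\<^esub> (x \<otimes>\<^bsub>free_grp\<^esub> y)"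
    by simp
  then have "min_rep x \<otimes>\<^bsub>free_grp\<^esub> y \<in> K #>\<^bsub>free_grp\<^esub> (x \<otimes>\<^bsub>free_grp\<^esub> y)"
    using k(1) by (auto simp add: r_coset_def simp del: free_grp_simps)
  then show ?thesis
    by (intro min_rep_eqI F.repr_independence[OF _ _ subgroup, symmetric]) auto
qed

lemma min_rep_eq_Nil_iff: "reduced x \<Longrightarrow> min_rep x = [] \<longleftrightarrow> x \<in> K"
proof -
  have coset_Nil: "K #>\<^bsub>free_grp\<^esub> [] = K"
    using F.coset_mult_one[of K] K_reduced by auto
  have rep_Nil: "min_rep [] = []"
    using min_rep_minimal[of "[]"] total_word_lenlex[of "[]" "min_rep []"]
    by (auto simp add: word_lenlex_def)
  assume x: "reduced x"
  show ?thesis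
  proof
    assume "min_rep x = []"
    then have "K #>\<^bsub>free_grp\<^esub> x = K"
      using coset_min_rep[OF x] coset_Nil by simp
    then show "x \<in> K"
      using in_own_coset[OF x] by simp
  next
    assume "x \<in> K"
    then have "K #>\<^bsub>free_grp\<^esub> x = K #>\<^bsub>free_grp\<^esub> []"
      using F.coset_join2[OF _ subgroup, of x] x coset_Nil by simp
    then show "min_rep x = []"
      using rep_Nil min_rep_eqI by metis
  qed
qed

lemma Nil_in_transversal: "[] \<in> transversal"
  using min_rep_in_transversal[of "[]"] min_rep_eq_Nil_iff[of "[]"] subgroup.one_closed[OF subgroup]
  by simp

text \<open>The transversal is prefix-closed (a Schreier transversal): otherwise appending the last
  letter to the representative of the prefix would give a smaller element of the coset.\<close>
lemma transversal_snoc_prefix: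
  assumes t: "s @ [l] \<in> transversal"
  shows "s \<in> transversal"
proof (rule ccontr)
  assume "s \<notin> transversal"
  have sl: "reduced (s @ [l])"
    using transversal_reduced[OF t] .
  then have s: "reduced s"
    by (simp add: reduced_append)
  define s' where "s' = min_rep s"
  have "s' \<noteq> s"
    using min_rep_in_transversal[OF s] \<open>s \<notin> transversal\<close> by (auto simp add: s'_def)
  then have s': "reduced s'" "(s', s) \<in> word_lenlex"
    using min_rep_minimal[OF s] total_word_lenlex[of s s'] min_rep_reduced[OF s]
    by (auto simp add: s'_def)
  have "min_rep (s' \<otimes>\<^bsub>free_grp\<^esub> [l]) = min_rep (s @ [l])"
    using min_rep_mult[OF s, of "[l]"] sl by (simp add: s'_def reduce_reduced)
  then have rep: "min_rep (s' \<otimes>\<^bsub>free_grp\<^esub> [l]) = s @ [l]"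
    using min_rep_transversal[OF t] by simp
  have "(s' \<otimes>\<^bsub>free_grp\<^esub> [l], s @ [l]) \<in> word_lenlex"
  proof (cases "s' \<noteq> [] \<and> last s' = inv_letter l")
    case True
    then have "s' \<otimes>\<^bsub>free_grp\<^esub> [l] = butlast s'"
      using reduce_snoc[OF s'(1), of l] by simp
    then show ?thesis
      using word_lenlex_length[OF s'(2)] by (simp add: word_lenlex_shorter)
  next
    case False
    then show ?thesis
      using reduce_snoc[OF s'(1), of l] word_lenlex_snoc[OF s'(2)] by auto
  qed
  with rep min_rep_minimal[of "s' \<otimes>\<^bsub>free_grp\<^esub> [l]"] show False
    by simp
qed

lemma transversal_prefix: "s @ r \<in> transversal \<Longrightarrow> s \<in> transversal"
proof (induction r rule: rev_induct)
  case (snoc l r)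
  then show ?case
    using transversal_snoc_prefix[of "s @ r" l] by simp
qed simp

definition schreier_elem :: "'a word \<Rightarrow> 'a \<times> bool \<Rightarrow> 'a word" where
  "schreier_elem t l =
     t \<otimes>\<^bsub>free_grp\<^esub> [l] \<otimes>\<^bsub>free_grp\<^esub> inv\<^bsub>free_grp\<^esub> (min_rep (t \<otimes>\<^bsub>free_grp\<^esub> [l]))"

definition schreier_basis :: "'a word set" where
  "schreier_basis =
     {schreier_elem t (a, True) | t a. t \<in> transversal \<and> schreier_elem t (a, True) \<noteq> []}"

lemma schreier_elem_in_K:
  assumes "reduced t"
  shows "schreier_elem t l \<in> K"
proof -
  define x where "x = t \<otimes>\<^bsub>free_grp\<^esub> [l]"
  have x: "x \<in> carrier free_grp"
    by (simp add: x_def)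
  obtain k where k: "k \<in> K" "min_rep x = k \<otimes>\<^bsub>free_grp\<^esub> x"
    using min_rep_in_coset[of x] x by (auto simp add: r_coset_def)
  have "k \<in> carrier free_grp"
    using k(1) K_reduced by simp
  then have "schreier_elem t l = inv\<^bsub>free_grp\<^esub> k"
    using x by (simp add: schreier_elem_def x_def[symmetric] k(2) F.inv_mult_group
        F.m_assoc[symmetric] del: free_grp_simps)
  then show ?thesis
    using k(1) subgroup.m_inv_closed[OF subgroup] by simp
qed

lemma schreier_basis_subset_K: "schreier_basis \<subseteq> K"
  unfolding schreier_basis_def using schreier_elem_in_K transversal_reduced by blast

lemma schreier_basis_carrier: "schreier_basis \<subseteq> carrier free_grp"
  using schreier_basis_subset_K K_reduced by auto

lemma min_rep_mult_inv_letter: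
  assumes "t \<in> transversal"
  shows "min_rep (min_rep (t \<otimes>\<^bsub>free_grp\<^esub> [l]) \<otimes>\<^bsub>free_grp\<^esub> [inv_letter l]) = t"
proof -
  have "min_rep (min_rep (t \<otimes>\<^bsub>free_grp\<^esub> [l]) \<otimes>\<^bsub>free_grp\<^esub> [inv_letter l]) =
      min_rep (reduce (t @ [l, inv_letter l]))"
    by (subst min_rep_mult) simp_all
  also have "\<dots> = t"
    using transversal_reduced[OF assms] min_rep_transversal[OF assms]
    by (simp add: reduce_snoc_inv_letter)
  finally show ?thesis .
qed

lemma inv_schreier_elem:
  assumes t: "t \<in> transversal"
  shows "inv\<^bsub>free_grp\<^esub> (schreier_elem t l) =
    schreier_elem (min_rep (t \<otimes>\<^bsub>free_grp\<^esub> [l])) (inv_letter l)"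
proof -
  define u where "u = min_rep (t \<otimes>\<^bsub>free_grp\<^esub> [l])"
  have carrier: "t \<in> carrier free_grp" "u \<in> carrier free_grp" "[l] \<in> carrier free_grp"
    using transversal_reduced[OF t] by (simp_all add: u_def min_rep_reduced)
  have "inv\<^bsub>free_grp\<^esub> [l] = [inv_letter l]"
    by simp
  then have "inv\<^bsub>free_grp\<^esub> (schreier_elem t l) =
      u \<otimes>\<^bsub>free_grp\<^esub> [inv_letter l] \<otimes>\<^bsub>free_grp\<^esub> inv\<^bsub>free_grp\<^esub> t"
    using carrier by (simp add: schreier_elem_def u_def[symmetric] F.inv_mult_group F.m_assoc
        del: free_grp_simps)
  also have "\<dots> = schreier_elem u (inv_letter l)"
    using min_rep_mult_inv_letter[OF t, of l] by (simp add: schreier_elem_def u_def)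
  finally show ?thesis
    by (simp add: u_def)
qed

lemma schreier_elem_eq_Nil:
  assumes "reduced t" "t \<otimes>\<^bsub>free_grp\<^esub> [l] \<in> transversal"
  shows "schreier_elem t l = []"
proof -
  have "t \<otimes>\<^bsub>free_grp\<^esub> [l] \<in> carrier free_grp"
    by simp
  then show ?thesis
    using F.r_inv min_rep_transversal[OF assms(2)] unfolding schreier_elem_def
    by (simp del: free_grp_simps) simp
qed

lemma schreier_elem_nonempty:
  assumes t: "t \<in> transversal" and ne: "schreier_elem t l \<noteq> []"
  shows "reduced (t @ [l])" "t @ [l] \<notin> transversal"
proof -
  have t': "reduced t"
    using transversal_reduced[OF t] .
  show "reduced (t @ [l])"
  proof (rule ccontr)
    assume "\<not> reduced (t @ [l])"
    then have last: "t \<noteq> [] \<and> last t = inv_letter l"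
      using t' by (auto simp add: reduced_append inv_letter_def prod_eq_iff)
    then have "butlast t \<in> transversal"
      using t transversal_prefix[of "butlast t" "[last t]"] append_butlast_last_id[of t] by simp
    then show False
      using schreier_elem_eq_Nil[OF t'] ne last reduce_snoc[OF t', of l] by simp
  qed
  then show "t @ [l] \<notin> transversal"
    using schreier_elem_eq_Nil[OF t', of l] ne by (auto simp add: reduce_reduced)
qed

lemma schreier_elem_decomp:
  assumes t: "t \<in> transversal" and ne: "schreier_elem t l \<noteq> []"
  shows "schreier_elem t l = t @ [l] @ inv_word (min_rep (t \<otimes>\<^bsub>free_grp\<^esub> [l]))"
proof -
  define u where "u = min_rep (t \<otimes>\<^bsub>free_grp\<^esub> [l])"
  have u: "u \<in> transversal"
    by (simp add: u_def min_rep_in_transversal)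
  have "schreier_elem u (inv_letter l) \<noteq> []"
    using inv_schreier_elem[OF t, of l] ne schreier_elem_in_K[OF transversal_reduced[OF t], of l]
      K_reduced by (fastforce simp add: u_def)
  then have "reduced (l # inv_word u)"
    using schreier_elem_nonempty(1)[OF u] reduced_inv_word[of "u @ [inv_letter l]"] by simp
  then have "reduced (t @ l # inv_word u)"
    using reduced_join schreier_elem_nonempty(1)[OF t ne] by blast
  moreover have "schreier_elem t l = reduce (t @ l # inv_word u)"
    using transversal_reduced[OF u] unfolding schreier_elem_def u_def[symmetric] by simp
  ultimately show ?thesis
    by (simp add: reduce_reduced u_def)
qed

lemma schreier_elem_in_generate:
  assumes t: "t \<in> transversal"
  shows "schreier_elem t l \<in> generate free_grp schreier_basis"
proof -
  have pos: "schreier_elem s (a, True) \<in> generate free_grp schreier_basis"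
    if "s \<in> transversal" for s a
  proof (cases "schreier_elem s (a, True) = []")
    case True
    then show ?thesis
      using generate.one[of free_grp schreier_basis] by simp
  next
    case False
    with that show ?thesis
      unfolding schreier_basis_def by (blast intro: generate.incl)
  qed
  obtain a e where l: "l = (a, e)"
    by (cases l)
  show ?thesis
  proof (cases e)
    case True
    with pos[OF t] l show ?thesis by simp
  next
    case False
    define u where "u = min_rep (t \<otimes>\<^bsub>free_grp\<^esub> [l])"
    have u: "u \<in> transversal"
      by (simp add: u_def min_rep_in_transversal)
    have "inv\<^bsub>free_grp\<^esub> (schreier_elem u (a, True)) = schreier_elem t l"
      using inv_schreier_elem[OF u, of "(a, True)"] min_rep_mult_inv_letter[OF t, of l] l False
      by (simp add: u_def inv_letter_def)
    then show ?thesis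
      using F.generate_m_inv_closed[OF schreier_basis_carrier pos[OF u, of a]] by simp
  qed
qed

text \<open>Reading a word letter by letter from a representative factors the corresponding
  element of \<open>K\<close> into Schreier generators.\<close>
lemma schreier_path_in_generate:
  assumes "t \<in> transversal" "reduced w"
  shows "t \<otimes>\<^bsub>free_grp\<^esub> w \<otimes>\<^bsub>free_grp\<^esub> inv\<^bsub>free_grp\<^esub> (min_rep (t \<otimes>\<^bsub>free_grp\<^esub> w))
    \<in> generate free_grp schreier_basis"
  using assms
proof (induction w arbitrary: t)
  case Nil
  then have "t \<otimes>\<^bsub>free_grp\<^esub> [] \<otimes>\<^bsub>free_grp\<^esub> inv\<^bsub>free_grp\<^esub> (min_rep (t \<otimes>\<^bsub>free_grp\<^esub> [])) = []"
    using transversal_reduced[of t] min_rep_transversal[of t]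
      reduce_append_inv_word_cancel[of "[]" t "[]"] by (simp add: reduce_reduced)
  then show ?case
    using generate.one[of free_grp schreier_basis] by simp
next
  case (Cons l w)
  define t' where "t' = min_rep (t \<otimes>\<^bsub>free_grp\<^esub> [l])"
  define r where "r = min_rep (t \<otimes>\<^bsub>free_grp\<^esub> (l # w))"
  have t': "t' \<in> transversal"
    by (simp add: t'_def min_rep_in_transversal)
  have w: "reduced w" and lw: "[l] \<otimes>\<^bsub>free_grp\<^esub> w = l # w"
    using Cons.prems(2) by (simp_all add: reduced_Cons reduce_reduced)
  have "min_rep (t' \<otimes>\<^bsub>free_grp\<^esub> w) = min_rep ((t \<otimes>\<^bsub>free_grp\<^esub> [l]) \<otimes>\<^bsub>free_grp\<^esub> w)"
    unfolding t'_def using w by (intro min_rep_mult) simp_all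
  then have r: "r = min_rep (t' \<otimes>\<^bsub>free_grp\<^esub> w)"
    using lw by (simp add: r_def)
  have carrier: "t \<in> carrier free_grp" "t' \<in> carrier free_grp" "r \<in> carrier free_grp"
    "w \<in> carrier free_grp" "[l] \<in> carrier free_grp"
    using transversal_reduced[OF Cons.prems(1)] transversal_reduced[OF t'] w
    by (simp_all add: r_def min_rep_reduced)
  have "schreier_elem t l \<otimes>\<^bsub>free_grp\<^esub>
        (t' \<otimes>\<^bsub>free_grp\<^esub> w \<otimes>\<^bsub>free_grp\<^esub> inv\<^bsub>free_grp\<^esub> r)
      = t \<otimes>\<^bsub>free_grp\<^esub> ([l] \<otimes>\<^bsub>free_grp\<^esub> w) \<otimes>\<^bsub>free_grp\<^esub> inv\<^bsub>free_grp\<^esub> r"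
    using carrier F.inv_solve_left'[of "w \<otimes>\<^bsub>free_grp\<^esub> inv\<^bsub>free_grp\<^esub> r" t']
    by (simp add: schreier_elem_def t'_def[symmetric] F.m_assoc del: free_grp_simps)
  then show ?case
    using generate.eng[OF schreier_elem_in_generate[OF Cons.prems(1), of l]
        Cons.IH[OF t' w, folded r]]
    by (simp only: lw r_def)
qed

lemma generate_schreier_basis: "generate free_grp schreier_basis = K"
proof
  show "generate free_grp schreier_basis \<subseteq> K"
    by (rule F.generate_subgroup_incl[OF schreier_basis_subset_K subgroup])
next
  show "K \<subseteq> generate free_grp schreier_basis"
  proof
    fix k
    assume k: "k \<in> K"
    then have "reduced k"
      by (rule K_reduced)
    then show "k \<in> generate free_grp schreier_basis"
      using schreier_path_in_generate[OF Nil_in_transversal, of k] min_rep_eq_Nil_iff[of k] k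
      by (simp add: reduce_reduced)
  qed
qed

definition basis_pick :: "'a word \<Rightarrow> 'a word \<times> 'a" where
  "basis_pick b = (SOME (t, a). t \<in> transversal \<and> schreier_elem t (a, True) = b)"

text \<open>A basis element \<open>b = t a u\<inverse>\<close> and its inverse \<open>u a\<inverse> t\<inverse>\<close> are Schreier generators
  starting at \<open>basis_start b True = t\<close> and \<open>basis_start b False = u\<close>, respectively.\<close>
definition basis_start :: "'a word \<Rightarrow> bool \<Rightarrow> 'a word" where
  "basis_start b e =
     (case basis_pick b of (t, a) \<Rightarrow> if e then t else min_rep (t \<otimes>\<^bsub>free_grp\<^esub> [(a, True)]))"

definition basis_letter :: "'a word \<Rightarrow> bool \<Rightarrow> 'a \<times> bool" where
  "basis_letter b e = (snd (basis_pick b), e)"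

lemma signed_basis_elem:
  assumes b: "b \<in> schreier_basis"
  shows "basis_start b e \<in> transversal"
    and "(if e then b else inv_word b) = schreier_elem (basis_start b e) (basis_letter b e)"
    and "schreier_elem (basis_start b e) (basis_letter b e) \<noteq> []"
    and "min_rep (basis_start b e \<otimes>\<^bsub>free_grp\<^esub> [basis_letter b e]) = basis_start b (\<not> e)"
proof -
  obtain t a where pick: "basis_pick b = (t, a)" "t \<in> transversal" "schreier_elem t (a, True) = b"
    and "b \<noteq> []"
    using b someI_ex[of "\<lambda>(t, a). t \<in> transversal \<and> schreier_elem t (a, True) = b"]
    unfolding schreier_basis_def basis_pick_def by (auto split: prod.splits)
  have "inv_word b = schreier_elem (min_rep (t \<otimes>\<^bsub>free_grp\<^esub> [(a, True)])) (a, False)"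
    using inv_schreier_elem[OF pick(2), of "(a, True)"] pick(3) schreier_basis_carrier b
    by (auto simp add: inv_letter_def)
  then show "basis_start b e \<in> transversal"
    and "(if e then b else inv_word b) = schreier_elem (basis_start b e) (basis_letter b e)"
    and "min_rep (basis_start b e \<otimes>\<^bsub>free_grp\<^esub> [basis_letter b e]) = basis_start b (\<not> e)"
    using pick min_rep_mult_inv_letter[OF pick(2), of "(a, True)"]
    by (simp_all add: basis_start_def basis_letter_def min_rep_in_transversal inv_letter_def)
  then show "schreier_elem (basis_start b e) (basis_letter b e) \<noteq> []"
    using \<open>b \<noteq> []\<close> by (metis inv_word_simps(5))
qed

lemma signed_basis_decomp:
  assumes "b \<in> schreier_basis"
  shows "(if e then b else inv_word b) =
    basis_start b e @ [basis_letter b e] @ inv_word (basis_start b (\<not> e))"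
  using signed_basis_elem[OF assms] schreier_elem_decomp by metis

lemma basis_letter_neg: "basis_letter b (\<not> e) = inv_letter (basis_letter b e)"
  by (simp add: basis_letter_def inv_letter_def)

lemma basis_start_letter_match:
  assumes b1: "b1 \<in> schreier_basis" and b2: "b2 \<in> schreier_basis"
    and start: "basis_start b2 e2 = basis_start b1 (\<not> e1)"
    and letter: "basis_letter b2 e2 = inv_letter (basis_letter b1 e1)"
  shows "b2 = b1 \<and> e2 = (\<not> e1)"
proof -
  have e2: "e2 = (\<not> e1)" and a: "basis_letter b2 = basis_letter b1"
    using letter by (auto simp add: basis_letter_def inv_letter_def)
  have "basis_start b2 e1 = basis_start b1 e1"
    using signed_basis_elem(4)[OF b1, of "\<not> e1"] signed_basis_elem(4)[OF b2, of "\<not> e1"]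
      start e2 a by simp
  with start e2 have "basis_start b2 True = basis_start b1 True"
    by (cases e1) simp_all
  then have "b2 = b1"
    using signed_basis_elem(2)[OF b1, of True] signed_basis_elem(2)[OF b2, of True] a by simp
  with e2 show ?thesis by simp
qed

lemma transversal_extend: "s @ [l] \<notin> transversal \<Longrightarrow> s @ l # v \<notin> transversal"
  using transversal_prefix[of "s @ [l]" v] by auto

text \<open>Where two Schreier generators meet, the free reduction of \<open>x\<inverse> y\<close> cannot reach their
  distinguished letters \<open>m1\<close> and \<open>m2\<close>: cancelling into one of them would exhibit the
  non-member \<open>x m1\<inverse>\<close> or \<open>y m2\<close> as a prefix of a member of the transversal.\<close>
lemma reduced_junction:
  assumes x: "x \<in> transversal" "schreier_elem x (inv_letter m1) \<noteq> []"
    and y: "y \<in> transversal" "schreier_elem y m2 \<noteq> []"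
    and ne: "\<not> (x = y \<and> m2 = inv_letter m1)"
  shows "reduced (m1 # reduce (inv_word x @ y) @ [m2])"
proof -
  note x' = schreier_elem_nonempty[OF x] and y' = schreier_elem_nonempty[OF y]
  obtain p xs ys where xy: "x = p @ xs" "y = p @ ys"
    and hd: "xs = [] \<or> ys = [] \<or> hd xs \<noteq> hd ys"
    using longest_common_prefix[of x y] by blast
  have xs: "reduced (xs @ [inv_letter m1])" and ys: "reduced (ys @ [m2])"
    using x'(1) y'(1) xy by (simp_all add: reduced_append)
  have "reduced (inv_word xs @ ys)"
    using xs ys hd by (auto simp add: reduced_append last_inv_word)
  moreover have "reduce (inv_word x @ y) = reduce (inv_word xs @ ys)"
    using reduce_inv_word_append_cancel[of "inv_word xs" p ys] xy by simp
  ultimately have R: "reduce (inv_word x @ y) = inv_word xs @ ys"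
    by (simp add: reduce_reduced)
  have "reduced (m1 # inv_word xs)"
    using xs reduced_inv_word[of "xs @ [inv_letter m1]"] by simp
  moreover have "hd ys \<noteq> inv_letter m1" if "xs = []" "ys \<noteq> []"
    using that xy y(1) transversal_extend[OF x'(2), of "tl ys"] by (cases ys) auto
  moreover have "hd xs \<noteq> m2" if "ys = []" "xs \<noteq> []"
    using that xy x(1) transversal_extend[OF y'(2), of "tl xs"] by (cases xs) auto
  moreover have "m2 \<noteq> inv_letter m1" if "xs = []" "ys = []"
    using ne xy that by simp
  ultimately have "reduced ((m1 # inv_word xs) @ (ys @ [m2]))"
    using ys hd unfolding reduced_append
    by (cases "xs = []"; cases "ys = []") (auto simp add: last_inv_word)
  with R show ?thesis by simp
qed

lemma signed_basis_mult:
  assumes b: "b \<in> schreier_basis" and b': "b' \<in> schreier_basis" and ne: "(b', e') \<noteq> (b, \<not> e)"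
    and Z: "reduced (basis_letter b' e' # Z)"
  defines "R \<equiv> reduce (inv_word (basis_start b (\<not> e)) @ basis_start b' e')"
  shows "reduce ((if e then b else inv_word b) @ basis_start b' e' @ basis_letter b' e' # Z) =
    basis_start b e @ basis_letter b e # R @ basis_letter b' e' # Z"
proof -
  have "\<not> (basis_start b (\<not> e) = basis_start b' e' \<and>
      basis_letter b' e' = inv_letter (basis_letter b e))"
  proof
    assume "basis_start b (\<not> e) = basis_start b' e' \<and>
      basis_letter b' e' = inv_letter (basis_letter b e)"
    then have "b' = b \<and> e' = (\<not> e)"
      by (elim conjE) (rule basis_start_letter_match[OF b b'], simp_all)
    with ne show False
      by simp
  qed
  then have "reduced (basis_letter b e # R @ [basis_letter b' e'])"
    unfolding R_def using signed_basis_elem(1,3)[OF b, of "\<not> e"] signed_basis_elem(1,3)[OF b']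
    by (intro reduced_junction) (simp_all add: basis_letter_neg)
  with Z have "reduced (basis_letter b e # R @ basis_letter b' e' # Z)"
    using reduced_join[of "basis_letter b e # R" "basis_letter b' e'" Z] by simp
  with schreier_elem_nonempty(1)[OF signed_basis_elem(1,3)[OF b, of e]]
  have "reduced (basis_start b e @ basis_letter b e # R @ basis_letter b' e' # Z)"
    by (rule reduced_join)
  moreover have "reduce ((if e then b else inv_word b) @ basis_start b' e' @ basis_letter b' e' # Z)
      = reduce ((basis_start b e @ [basis_letter b e]) @ R @ basis_letter b' e' # Z)"
    unfolding signed_basis_decomp[OF b, of e] R_def reduce_append_reduce_middle by simp
  ultimately show ?thesis
    by (simp add: reduce_reduced)
qed

lemma word_eval_schreier_basis:
  assumes "w \<noteq> []" "reduced w" "fst ` set w \<subseteq> schreier_basis"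
  shows "\<exists>Z. word_eval free_grp w =
    basis_start (fst (hd w)) (snd (hd w)) @ basis_letter (fst (hd w)) (snd (hd w)) # Z"
  using assms
proof (induction w)
  case (Cons l w)
  obtain b e where l: "l = (b, e)" and b: "b \<in> schreier_basis"
    using Cons.prems by (cases l) auto
  then have eval: "word_eval free_grp (l # w) =
      reduce ((if e then b else inv_word b) @ word_eval free_grp w)"
    using schreier_basis_carrier by auto
  show ?case
  proof (cases "w = []")
    case True
    have "reduced (if e then b else inv_word b)"
      using b schreier_basis_carrier by auto
    with True eval l show ?thesis
      by (simp add: reduce_reduced signed_basis_decomp[OF b, of e] del: reduced_inv_word)
  next
    case False
    obtain b' e' where hd: "hd w = (b', e')"
      by (cases "hd w")
    have w: "reduced w" "fst ` set w \<subseteq> schreier_basis"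
      using Cons.prems by (simp_all add: reduced_Cons)
    have "hd w \<in> set w" "hd w \<noteq> inv_letter l"
      using False Cons.prems(2) by (simp_all add: reduced_Cons)
    then have b': "b' \<in> schreier_basis" and ne: "(b', e') \<noteq> (b, \<not> e)"
      using w(2) hd l by (force, simp add: inv_letter_def)
    obtain Z where Z: "word_eval free_grp w = basis_start b' e' @ basis_letter b' e' # Z"
      using Cons.IH[OF False w] hd by auto
    have "fst ` set w \<subseteq> carrier free_grp"
      using w(2) schreier_basis_carrier by (rule order_trans)
    then have "reduced (word_eval free_grp w)"
      using F.word_eval_closed by simp
    then have "reduced (basis_letter b' e' # Z)"
      using Z by (simp add: reduced_append)
    then have "word_eval free_grp (l # w) = basis_start b e @ basis_letter b e #
        reduce (inv_word (basis_start b (\<not> e)) @ basis_start b' e') @ basis_letter b' e' # Z"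
      unfolding eval Z by (rule signed_basis_mult[OF b b' ne])
    then show ?thesis
      by (simp add: l)
  qed
qed simp

theorem free_basis_schreier_basis: "free_basis (free_grp\<lparr>carrier := K\<rparr>) schreier_basis"
  unfolding free_basis_def
proof (intro conjI allI impI)
  show "schreier_basis \<subseteq> carrier (free_grp\<lparr>carrier := K\<rparr>)"
    using schreier_basis_subset_K by simp
  show "generate (free_grp\<lparr>carrier := K\<rparr>) schreier_basis = carrier (free_grp\<lparr>carrier := K\<rparr>)"
    using F.generate_consistent[OF schreier_basis_subset_K subgroup] generate_schreier_basis
    by simp
  fix w
  assume w: "w \<noteq> [] \<and> reduced w \<and> fst ` set w \<subseteq> schreier_basis"
  then have "word_eval (free_grp\<lparr>carrier := K\<rparr>) w = word_eval free_grp w"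
    using schreier_basis_subset_K by (intro word_eval_subgroup[OF group_free_grp subgroup]) auto
  then show "word_eval (free_grp\<lparr>carrier := K\<rparr>) w \<noteq> \<one>\<^bsub>free_grp\<lparr>carrier := K\<rparr>\<^esub>"
    using word_eval_schreier_basis w by fastforce
qed

end

theorem Nielsen_Schreier:
  fixes K :: "('a::countable) word set"
  assumes "subgroup K free_grp"
  shows "free_group (free_grp\<lparr>carrier := K\<rparr>)"
proof -
  interpret free_subgroup K
    by (rule free_subgroup.intro[OF assms])
  show ?thesis
    unfolding free_group_def using free_basis_schreier_basis F.subgroup_imp_group[OF assms]
    by blast
qed

lemma locally_free_free_grp: "locally_free (free_grp :: ('a::countable) word monoid)"
  unfolding locally_free_def
  using group_free_grp F.generate_is_subgroup Nielsen_Schreier by auto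


section \<open>Local freeness along injective homomorphisms\<close>

lemma reduced_map_inj:
  assumes "inj_on f S" "fst ` set w \<subseteq> S" "reduced w"
  shows "reduced (map (\<lambda>(x, e). (f x, e)) w)"
  using assms(2,3)
  by (induction w rule: reduced.induct)
    (auto simp add: inv_letter_def split_def inj_on_eq_iff[OF assms(1)])

lemma free_basis_inj_hom:
  assumes G: "group G" and G': "group G'" and h: "h \<in> hom G G'"
    and inj: "inj_on h (carrier G)" and surj: "h ` carrier G = carrier G'"
    and B: "B \<subseteq> carrier G" and basis: "free_basis G' (h ` B)"
  shows "free_basis G B"
  unfolding free_basis_def
proof (intro conjI allI impI)
  interpret h: group_hom G G' h
    by (intro group_hom.intro group_hom_axioms.intro G G' h)
  show "B \<subseteq> carrier G" by (rule B)
  have "h ` generate G B = h ` carrier G"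
    using h.generate_img[OF B] basis surj by (simp add: free_basis_def)
  then show "generate G B = carrier G"
    using inj_on_image_eq_iff[OF inj] h.G.generate_incl[OF B] by blast
  fix w
  assume w: "w \<noteq> [] \<and> reduced w \<and> fst ` set w \<subseteq> B"
  define w' where "w' = map (\<lambda>(x, e). (h x, e)) w"
  have "w' \<noteq> [] \<and> reduced w' \<and> fst ` set w' \<subseteq> h ` B"
    using w B reduced_map_inj[OF inj, of w] by (auto simp add: w'_def)
  then have "word_eval G' w' \<noteq> \<one>\<^bsub>G'\<^esub>"
    using basis unfolding free_basis_def by blast
  then show "word_eval G w \<noteq> \<one>\<^bsub>G\<^esub>"
    using word_eval_hom[OF h G G', of w] w B by (auto simp add: w'_def)
qed

lemma free_group_inj_hom_subgroup:
  assumes G: "group G" and G': "group G'" and h: "h \<in> hom G G'"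
    and inj: "inj_on h (carrier G)" and K: "subgroup K G"
    and free: "free_group (G'\<lparr>carrier := h ` K\<rparr>)"
  shows "free_group (G\<lparr>carrier := K\<rparr>)"
proof -
  interpret h: group_hom G G' h
    by (intro group_hom.intro group_hom_axioms.intro G G' h)
  obtain B' where B': "free_basis (G'\<lparr>carrier := h ` K\<rparr>) B'"
    using free unfolding free_group_def by blast
  then have B'K: "B' \<subseteq> h ` K"
    by (simp add: free_basis_def)
  have "free_basis (G\<lparr>carrier := K\<rparr>) (inv_into K h ` B')"
  proof (rule free_basis_inj_hom)
    show "group (G\<lparr>carrier := K\<rparr>)" "group (G'\<lparr>carrier := h ` K\<rparr>)"
      using K h.subgroup_img_is_subgroup[OF K]
      by (simp_all add: h.G.subgroup_imp_group h.H.subgroup_imp_group)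
    show "h \<in> hom (G\<lparr>carrier := K\<rparr>) (G'\<lparr>carrier := h ` K\<rparr>)"
    proof (rule homI)
      fix x y
      assume "x \<in> carrier (G\<lparr>carrier := K\<rparr>)" "y \<in> carrier (G\<lparr>carrier := K\<rparr>)"
      then show "h (x \<otimes>\<^bsub>G\<lparr>carrier := K\<rparr>\<^esub> y) = h x \<otimes>\<^bsub>G'\<lparr>carrier := h ` K\<rparr>\<^esub> h y"
        using subgroup.subset[OF K] by (simp add: subset_iff)
    qed simp
    show "inj_on h (carrier (G\<lparr>carrier := K\<rparr>))"
      using inj subgroup.subset[OF K] by (simp add: inj_on_subset)
    show "inv_into K h ` B' \<subseteq> carrier (G\<lparr>carrier := K\<rparr>)"
      using B'K by (auto intro: inv_into_into)
    show "free_basis (G'\<lparr>carrier := h ` K\<rparr>) (h ` inv_into K h ` B')"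
      using B' B'K by (simp add: image_image f_inv_into_f subset_iff cong: image_cong)
  qed simp
  then show ?thesis
    unfolding free_group_def using h.G.subgroup_imp_group[OF K] by blast
qed

lemma locally_free_inj_hom:
  assumes G: "group G" and G': "group G'" and h: "h \<in> hom G G'"
    and inj: "inj_on h (carrier G)" and lf: "locally_free G'"
  shows "locally_free G"
  unfolding locally_free_def
proof (intro conjI allI impI)
  interpret h: group_hom G G' h
    by (intro group_hom.intro group_hom_axioms.intro G G' h)
  show "group G" by (rule G)
  fix A
  assume A: "finite A \<and> A \<subseteq> carrier G"
  then have "h ` A \<subseteq> carrier G'" "h ` generate G A = generate G' (h ` A)"
    using h.generate_img by auto
  then have "free_group (G'\<lparr>carrier := h ` generate G A\<rparr>)"
    using lf A unfolding locally_free_def by simp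
  then show "free_group (G\<lparr>carrier := generate G A\<rparr>)"
    using A by (intro free_group_inj_hom_subgroup[OF G G' h inj] h.G.generate_is_subgroup) simp_all
qed


section \<open>Normal closures\<close>

context group
begin

lemma normal_closure_normal:
  assumes "R \<subseteq> carrier G"
  shows "normal_closure G R \<lhd> G"
  unfolding normal_closure_def
proof (rule normal_generateI)
  show "(\<Union>g\<in>carrier G. (\<lambda>r. g \<otimes> r \<otimes> inv g) ` R) \<subseteq> carrier G"
    using assms by auto
  fix c g
  assume "c \<in> (\<Union>g\<in>carrier G. (\<lambda>r. g \<otimes> r \<otimes> inv g) ` R)" "g \<in> carrier G"
  then obtain g' r where "g' \<in> carrier G" "r \<in> R" "c = g' \<otimes> r \<otimes> inv g'" "g \<in> carrier G"
    by blast
  moreover from this have "g \<otimes> c \<otimes> inv g = (g \<otimes> g') \<otimes> r \<otimes> inv (g \<otimes> g')"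
    using assms by (auto simp add: m_assoc inv_mult_group)
  ultimately show "g \<otimes> c \<otimes> inv g \<in> (\<Union>g\<in>carrier G. (\<lambda>r. g \<otimes> r \<otimes> inv g) ` R)"
    by blast
qed

lemma normal_closure_incl:
  assumes "R \<subseteq> carrier G" "r \<in> R"
  shows "r \<in> normal_closure G R"
proof -
  have "r = \<one> \<otimes> r \<otimes> inv \<one>"
    using assms by auto
  then show ?thesis
    unfolding normal_closure_def using assms(2) by (blast intro: generate.incl)
qed

lemma normal_closure_minimal:
  assumes "N \<lhd> G" "R \<subseteq> N"
  shows "normal_closure G R \<subseteq> N"
  unfolding normal_closure_def
  using assms normal_inv_iff by (intro generate_subgroup_incl) (auto dest: normal_imp_subgroup)

lemma kernel_eq_normal_subgroup:
  assumes N: "N \<lhd> G" and h: "h \<in> hom G G" and sub: "N \<subseteq> kernel G G h"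
    and retract: "\<And>x. x \<in> carrier G \<Longrightarrow> N #> h x = N #> x"
  shows "kernel G G h = N"
proof
  show "kernel G G h \<subseteq> N"
  proof
    fix x
    assume x: "x \<in> kernel G G h"
    then have "N #> x = N #> \<one>"
      using retract[of x] by (simp add: kernel_def)
    then show "x \<in> N"
      using x N coset_mult_one rcos_self[of x N]
      by (auto simp add: kernel_def normal_imp_subgroup subgroup.subset)
  qed
qed (rule sub)

end


section \<open>The group \<open>H\<close>\<close>

definition H_relations :: "('g, 'b) monoid_scheme \<Rightarrow> (int \<Rightarrow> 'g) \<Rightarrow> (int \<Rightarrow> 'g) \<Rightarrow> bool" where
  "H_relations G x y \<longleftrightarrow>
     (\<forall>n. y n = inv\<^bsub>G\<^esub> (x (n + 1)) \<otimes>\<^bsub>G\<^esub> inv\<^bsub>G\<^esub> (y (n + 1)) \<otimes>\<^bsub>G\<^esub> x (n + 1))"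

context group
begin

lemma mult_inv_cancel_left: "a \<in> carrier G \<Longrightarrow> z \<in> carrier G \<Longrightarrow> a \<otimes> (inv a \<otimes> z) = z"
  by (simp add: m_assoc[symmetric])

lemma inv_conj_inv_conj:
  "a \<in> carrier G \<Longrightarrow> b \<in> carrier G \<Longrightarrow> inv a \<otimes> inv (a \<otimes> inv b \<otimes> inv a) \<otimes> a = b"
  by (simp add: inv_mult_group m_assoc m_assoc[symmetric, of "inv a" a])

lemma H_relations_down:
  assumes "H_relations G x y"
  shows "y (n - 1) = inv (x n) \<otimes> inv (y n) \<otimes> x n"
  using assms[unfolded H_relations_def, rule_format, of "n - 1"] by simp

lemma H_relations_up:
  assumes "range x \<subseteq> carrier G" "range y \<subseteq> carrier G" "H_relations G x y"
  shows "y (n + 1) = x (n + 1) \<otimes> inv (y n) \<otimes> inv (x (n + 1))"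
proof -
  have x: "x (n + 1) \<in> carrier G" and y: "y (n + 1) \<in> carrier G"
    using assms(1,2) by auto
  have "y n = inv (x (n + 1)) \<otimes> inv (y (n + 1)) \<otimes> x (n + 1)"
    using assms(3) unfolding H_relations_def by (rule spec)
  then show ?thesis
    using x y by (simp add: inv_mult_group m_assoc mult_inv_cancel_left)
qed

text \<open>In the relations, \<open>y\<^sub>n\<close> determines \<open>y\<^sub>n\<^sub>+\<^sub>1\<close> and conversely, so \<open>y\<^sub>0\<close> determines all of them.\<close>
lemma H_relations_unique:
  assumes "range x \<subseteq> carrier G" "range y \<subseteq> carrier G" "range y' \<subseteq> carrier G"
    and "H_relations G x y" "H_relations G x y'" "y 0 = y' 0"
  shows "y n = y' n"
proof (induction n rule: int_induct[where k = 0])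
  case (step1 i)
  then show ?case
    using H_relations_up[OF assms(1,2,4), of i] H_relations_up[OF assms(1,3,5), of i] by simp
next
  case (step2 i)
  then show ?case
    using H_relations_down[OF assms(4), of i] H_relations_down[OF assms(5), of i] by simp
qed (rule assms(6))

lemma H_relations_eq_one_iff:
  assumes "range x \<subseteq> carrier G" "range y \<subseteq> carrier G" "H_relations G x y"
  shows "y n = \<one> \<longleftrightarrow> y 0 = \<one>"
proof -
  have carrier: "x i \<in> carrier G" "y i \<in> carrier G" for i
    using assms(1,2) by auto
  have step: "y (i - 1) = \<one> \<longleftrightarrow> y i = \<one>" for i
    using H_relations_down[OF assms(3), of i] carrier by (simp add: m_assoc inv_solve_left')
  show ?thesis
  proof (induction n rule: int_induct[where k = 0])
    case (step1 i)
    then show ?case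
      using step[of "i + 1"] by simp
  next
    case (step2 i)
    then show ?case
      using step[of i] by simp
  qed simp
qed

lemma H_relations_free_lift:
  assumes "range g \<subseteq> carrier G"
  shows "H_relations G (\<lambda>m. g (Inl m)) (\<lambda>n. g (Inr n)) \<longleftrightarrow>
    (\<forall>r\<in>H_rels. free_lift G g r = \<one>)"
proof -
  have g: "g a \<in> carrier G" for a
    using assms by auto
  have "free_lift G g [(Inr n, False), (Inl (n + 1), False), (Inr (n + 1), False), (Inl (n + 1), True)]
      = inv (g (Inr n)) \<otimes> (inv (g (Inl (n + 1))) \<otimes> inv (g (Inr (n + 1))) \<otimes> g (Inl (n + 1)))"
    for n
    using g by (simp add: free_lift_Cons m_assoc)
  then show ?thesis
    using g by (simp add: H_relations_def H_rels_def inv_solve_left') metis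
qed

end

lemma H_relations_hom:
  assumes "h \<in> hom G G'" "group G" "group G'" "range x \<subseteq> carrier G" "range y \<subseteq> carrier G"
    and "H_relations G x y"
  shows "H_relations G' (h \<circ> x) (h \<circ> y)"
proof -
  interpret group_hom G G' h
    by (intro group_hom.intro group_hom_axioms.intro assms)
  show ?thesis
    unfolding H_relations_def
  proof
    fix n
    have "y n = inv\<^bsub>G\<^esub> (x (n + 1)) \<otimes>\<^bsub>G\<^esub> inv\<^bsub>G\<^esub> (y (n + 1)) \<otimes>\<^bsub>G\<^esub> x (n + 1)"
      using assms(6) unfolding H_relations_def by (rule spec)
    then show "(h \<circ> y) n =
        inv\<^bsub>G'\<^esub> ((h \<circ> x) (n + 1)) \<otimes>\<^bsub>G'\<^esub> inv\<^bsub>G'\<^esub> ((h \<circ> y) (n + 1)) \<otimes>\<^bsub>G'\<^esub> (h \<circ> x) (n + 1)"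
      using assms(4,5) by (simp add: image_subset_iff)
  qed
qed

fun y_up :: "nat \<Rightarrow> (int + int) word" where
  "y_up 0 = [(Inr 0, True)]"
| "y_up (Suc k) = [(Inl (int k + 1), True)] \<otimes>\<^bsub>free_grp\<^esub> inv\<^bsub>free_grp\<^esub> (y_up k)
    \<otimes>\<^bsub>free_grp\<^esub> inv\<^bsub>free_grp\<^esub> [(Inl (int k + 1), True)]"

fun y_down :: "nat \<Rightarrow> (int + int) word" where
  "y_down 0 = [(Inr 0, True)]"
| "y_down (Suc k) = inv\<^bsub>free_grp\<^esub> [(Inl (- int k), True)] \<otimes>\<^bsub>free_grp\<^esub> inv\<^bsub>free_grp\<^esub> (y_down k)
    \<otimes>\<^bsub>free_grp\<^esub> [(Inl (- int k), True)]"

definition y_image :: "int \<Rightarrow> (int + int) word" where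
  "y_image n = (if 0 \<le> n then y_up (nat n) else y_down (nat (- n)))"

lemma y_image_carrier: "y_image n \<in> carrier free_grp"
proof -
  have "y_up k \<in> carrier free_grp" "y_down k \<in> carrier free_grp" for k
    by (induction k) (simp_all only: y_up.simps y_down.simps F.m_closed F.inv_closed, simp_all)
  then show ?thesis
    by (simp add: y_image_def)
qed

lemma H_relations_y_image: "H_relations free_grp (\<lambda>m. [(Inl m, True)]) y_image"
  unfolding H_relations_def
proof
  fix n :: int
  have x: "[(Inl (n + 1), True)] \<in> carrier free_grp"
    by simp
  show "y_image n = inv\<^bsub>free_grp\<^esub> [(Inl (n + 1), True)] \<otimes>\<^bsub>free_grp\<^esub>
      inv\<^bsub>free_grp\<^esub> (y_image (n + 1)) \<otimes>\<^bsub>free_grp\<^esub> [(Inl (n + 1), True)]"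
  proof (cases "0 \<le> n")
    case True
    then have "y_image (n + 1) = [(Inl (n + 1), True)] \<otimes>\<^bsub>free_grp\<^esub> inv\<^bsub>free_grp\<^esub> (y_image n)
        \<otimes>\<^bsub>free_grp\<^esub> inv\<^bsub>free_grp\<^esub> [(Inl (n + 1), True)]"
      by (simp add: y_image_def nat_add_distrib del: free_grp_simps)
    then show ?thesis
      using F.inv_conj_inv_conj[OF x y_image_carrier] by simp
  next
    case False
    define k where "k = nat (- (n + 1))"
    have "- int k = n + 1"
      using False by (simp add: k_def)
    have "y_image n = y_down (Suc k)"
      using False by (simp add: y_image_def k_def nat_diff_distrib Suc_nat_eq_nat_zadd1)
    also have "\<dots> = inv\<^bsub>free_grp\<^esub> [(Inl (n + 1), True)] \<otimes>\<^bsub>free_grp\<^esub>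
        inv\<^bsub>free_grp\<^esub> (y_down k) \<otimes>\<^bsub>free_grp\<^esub> [(Inl (n + 1), True)]"
      using False by (simp only: y_down.simps \<open>- int k = n + 1\<close>)
    also have "y_down k = y_image (n + 1)"
      using False by (cases "n + 1 = 0") (simp_all add: y_image_def k_def)
    finally show ?thesis .
  qed
qed

definition gen_image :: "int + int \<Rightarrow> (int + int) word" where
  "gen_image = case_sum (\<lambda>m. [(Inl m, True)]) y_image"

definition H_embedding :: "(int + int) word \<Rightarrow> (int + int) word" where
  "H_embedding = free_lift free_grp gen_image"

definition H_relator_closure :: "(int + int) word set" where
  "H_relator_closure = normal_closure free_grp (reduce ` H_rels)"

lemma gen_image_carrier: "range gen_image \<subseteq> carrier free_grp"
  using y_image_carrier by (auto simp add: gen_image_def split: sum.splits)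

lemma gen_image_nonempty: "gen_image a \<noteq> []"
proof -
  have "range (\<lambda>m. [(Inl m, True)]) \<subseteq> carrier free_grp" "range y_image \<subseteq> carrier free_grp"
    using y_image_carrier by auto
  from F.H_relations_eq_one_iff[OF this H_relations_y_image]
  have "y_image n \<noteq> []" for n
    by (simp add: y_image_def[of 0])
  then show ?thesis
    by (simp add: gen_image_def split: sum.splits)
qed

lemma H_embedding_hom: "H_embedding \<in> hom free_grp free_grp"
  unfolding H_embedding_def by (rule F.free_lift_hom[OF gen_image_carrier])

lemma H_embedding_gen: "H_embedding [(a, True)] = gen_image a"
  using gen_image_carrier
  by (simp add: H_embedding_def F.free_lift_Cons image_subset_iff del: free_grp_simps)

lemma normal_H_relator_closure: "H_relator_closure \<lhd> free_grp"
  unfolding H_relator_closure_def by (rule F.normal_closure_normal) auto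

interpretation H_relator_closure: normal H_relator_closure free_grp
  by (rule normal_H_relator_closure)

interpretation H_embedding: group_hom free_grp free_grp H_embedding
  by (intro group_hom.intro group_hom_axioms.intro group_free_grp H_embedding_hom)

lemma H_relator_coset_carrier [simp]:
  "reduced w \<Longrightarrow> H_relator_closure #>\<^bsub>free_grp\<^esub> w \<in> carrier (free_grp Mod H_relator_closure)"
  using hom_in_carrier[OF H_relator_closure.r_coset_hom_Mod] by simp

lemma H_relator_closure_subset_kernel:
  "H_relator_closure \<subseteq> kernel free_grp free_grp H_embedding"
  unfolding H_relator_closure_def
proof (rule F.normal_closure_minimal[OF H_embedding.normal_kernel])
  have "\<forall>r\<in>H_rels. free_lift free_grp gen_image r = \<one>\<^bsub>free_grp\<^esub>"
    using F.H_relations_free_lift[OF gen_image_carrier] H_relations_y_image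
    by (simp add: gen_image_def del: free_grp_simps)
  then have "H_embedding (reduce r) = []" if "r \<in> H_rels" for r
    using that by (simp add: H_embedding_def F.free_lift_reduce[OF gen_image_carrier])
  then show "reduce ` H_rels \<subseteq> kernel free_grp free_grp H_embedding"
    by (auto simp add: kernel_def)
qed

lemma H_relations_mod_relators:
  "H_relations (free_grp Mod H_relator_closure)
    (\<lambda>m. H_relator_closure #>\<^bsub>free_grp\<^esub> [(Inl m, True)])
    (\<lambda>n. H_relator_closure #>\<^bsub>free_grp\<^esub> [(Inr n, True)])"
proof -
  let ?q = "\<lambda>w. H_relator_closure #>\<^bsub>free_grp\<^esub> w"
  interpret Q: group "free_grp Mod H_relator_closure"
    by (rule H_relator_closure.factorgroup_is_group)
  have g: "range (\<lambda>a. ?q [(a, True)]) \<subseteq> carrier (free_grp Mod H_relator_closure)"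
    by auto
  have "free_lift (free_grp Mod H_relator_closure) (\<lambda>a. ?q [(a, True)]) r =
      \<one>\<^bsub>free_grp Mod H_relator_closure\<^esub>" if r: "r \<in> H_rels" for r
  proof -
    have "reduce r \<in> H_relator_closure"
      unfolding H_relator_closure_def using r by (intro F.normal_closure_incl) auto
    then have "?q (reduce r) = \<one>\<^bsub>free_grp Mod H_relator_closure\<^esub>"
      using F.coset_join2[OF _ H_relator_closure.subgroup_axioms] by simp
    then show ?thesis
      using Q.hom_free_grp_eq_free_lift[OF H_relator_closure.r_coset_hom_Mod, of "reduce r"]
        Q.free_lift_reduce[OF g]
      by simp
  qed
  then show ?thesis
    using Q.H_relations_free_lift[OF g] by simp
qed

text \<open>Modulo the relators, \<open>y_image n\<close> satisfies the same relations as \<open>y\<^sub>n\<close> and agrees with it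
  for \<open>n = 0\<close>.\<close>
lemma y_image_mod_relators:
  "H_relator_closure #>\<^bsub>free_grp\<^esub> y_image n = H_relator_closure #>\<^bsub>free_grp\<^esub> [(Inr n, True)]"
proof -
  let ?q = "\<lambda>w. H_relator_closure #>\<^bsub>free_grp\<^esub> w"
  interpret Q: group "free_grp Mod H_relator_closure"
    by (rule H_relator_closure.factorgroup_is_group)
  have "H_relations (free_grp Mod H_relator_closure) (?q \<circ> (\<lambda>m. [(Inl m, True)])) (?q \<circ> y_image)"
    using y_image_carrier
    by (intro H_relations_hom[OF H_relator_closure.r_coset_hom_Mod group_free_grp
          Q.is_group _ _ H_relations_y_image]) auto
  moreover have "range (\<lambda>m. ?q [(Inl m, True)]) \<subseteq> carrier (free_grp Mod H_relator_closure)"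
    "range (?q \<circ> y_image) \<subseteq> carrier (free_grp Mod H_relator_closure)"
    "range (\<lambda>n. ?q [(Inr n, True)]) \<subseteq> carrier (free_grp Mod H_relator_closure)"
    using y_image_carrier by auto
  ultimately show ?thesis
    using Q.H_relations_unique[OF _ _ _ _ H_relations_mod_relators, of "?q \<circ> y_image" n]
    by (simp add: comp_def y_image_def[of 0])
qed

lemma H_embedding_mod_relators:
  assumes "reduced w"
  shows "H_relator_closure #>\<^bsub>free_grp\<^esub> H_embedding w = H_relator_closure #>\<^bsub>free_grp\<^esub> w"
proof -
  interpret q: group_hom free_grp "free_grp Mod H_relator_closure"
    "\<lambda>w. H_relator_closure #>\<^bsub>free_grp\<^esub> w"
    by (intro group_hom.intro group_hom_axioms.intro group_free_grp
        H_relator_closure.factorgroup_is_group H_relator_closure.r_coset_hom_Mod)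
  have "(\<lambda>w. H_relator_closure #>\<^bsub>free_grp\<^esub> H_embedding w)
      \<in> hom free_grp (free_grp Mod H_relator_closure)"
    by (rule homI) (simp_all only: H_embedding.hom_closed q.hom_closed
        H_embedding.hom_mult q.hom_mult)
  then show ?thesis
    using q.H.hom_free_grp_eqI[OF _ H_relator_closure.r_coset_hom_Mod _ assms]
      y_image_mod_relators
    by (simp add: H_embedding_gen gen_image_def split: sum.splits)
qed

lemma kernel_H_embedding: "kernel free_grp free_grp H_embedding = H_relator_closure"
  using F.kernel_eq_normal_subgroup[OF normal_H_relator_closure H_embedding_hom
      H_relator_closure_subset_kernel H_embedding_mod_relators]
  by simp

lemma presented_group_H: "presented_group H_rels = free_grp Mod kernel free_grp free_grp H_embedding"
  unfolding presented_group_def kernel_H_embedding H_relator_closure_def ..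

lemma pres_gen_H_nontrivial: "pres_gen H_rels a \<noteq> \<one>\<^bsub>presented_group H_rels\<^esub>"
proof
  assume "pres_gen H_rels a = \<one>\<^bsub>presented_group H_rels\<^esub>"
  then have "H_relator_closure #>\<^bsub>free_grp\<^esub> [(a, True)] = H_relator_closure"
    by (simp add: pres_gen_def presented_group_def H_relator_closure_def)
  then have "[(a, True)] \<in> kernel free_grp free_grp H_embedding"
    using F.rcos_self[OF _ H_relator_closure.subgroup_axioms, of "[(a, True)]"] kernel_H_embedding
    by simp
  then show False
    using H_embedding_gen gen_image_nonempty by (simp add: kernel_def)
qed

theorem lemma3p1:
  shows "locally_free (presented_group H_rels) \<and>
    (\<forall>m::int. pres_gen H_rels (Inl m) \<noteq> \<one>\<^bsub>presented_group H_rels\<^esub>) \<and>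
    (\<forall>n::int. pres_gen H_rels (Inr n) \<noteq> \<one>\<^bsub>presented_group H_rels\<^esub>)"
proof -
  have "locally_free (presented_group H_rels)"
    unfolding presented_group_H
    by (rule locally_free_inj_hom[OF normal.factorgroup_is_group[OF H_embedding.normal_kernel]
          group_free_grp H_embedding.FactGroup_hom H_embedding.FactGroup_inj_on
          locally_free_free_grp])
  then show ?thesis
    using pres_gen_H_nontrivial by blast
qed

end
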